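(* For $n\in\mathbb Z$ let $m_n=m(S_n)$ be the mean of the segment $S_n$. Then $m_n=0$ if $n$ is even; $0\leq m_n\leq 1$ if $n$ is odd and $n\geq 0$; and $-1\leq m_n\leq 0$ if $n$ is odd and $n\leq 0$.
   Context: Bipartite Influence: on a bipartite graph with black and white vertices (edges between colours), isolated vertices are credited to the owner of their colour (black to Left, white to Right); Left picks a black vertex $x$ and removes $x$, its neighbours and the vertices that become isolated (credited to her); Right likewise with white vertices; score = Left's total minus Right's. $Ls$, $Rs$ are optimal scores with Left, resp. Right, moving first. A sum of positions is their disjoint union; $pG$ is the disjoint union of $p$ copies of $G$. For $n\geq 1$, $S_n$ is the path $v_1\cdots v_n$ with $v_i$ black iff $i$ is odd; $S_{-n}$ is the path $v_1\cdots v_n$ with $v_i$ white iff $i$ is odd; $S_0$ is the empty graph. Bipartite Influence positions are dicotic nonzugzwang games, so the mean $m(G)=\lim_{p\to\infty}Ls(pG)/p=\lim_{p\to\infty}Rs(pG)/p$ exists (Milnor). *)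

theory Defs
  imports Complex_Main
begin

(* A position of Bipartite Influence: a vertex set V, a colouring (bl v = True iff v is black),
   and a symmetric edge relation E. *)
type_synonym 'v pos = "'v set \<times> ('v \<Rightarrow> bool) \<times> ('v \<Rightarrow> 'v \<Rightarrow> bool)"

definition nbhd :: "('v \<Rightarrow> 'v \<Rightarrow> bool) \<Rightarrow> 'v set \<Rightarrow> 'v \<Rightarrow> 'v set" where
  "nbhd E U x = {y \<in> U. E x y}"

definition isolated :: "('v \<Rightarrow> 'v \<Rightarrow> bool) \<Rightarrow> 'v set \<Rightarrow> 'v set" where
  "isolated E U = {v \<in> U. \<forall>w \<in> U. \<not> E v w}"

(* vertices removed (and credited to the mover) when x is picked in the induced subgraph on U:
   x, its neighbours, and the vertices that thereby become isolated *)
definition removed :: "('v \<Rightarrow> 'v \<Rightarrow> bool) \<Rightarrow> 'v set \<Rightarrow> 'v \<Rightarrow> 'v set" where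
  "removed E U x = (let R = insert x (nbhd E U x) in R \<union> isolated E (U - R))"

(* optimal score (Left minus Right) of the remaining game on vertex set U (no isolated vertices),
   player to move: Left if lft, Right otherwise; k is fuel (card U suffices, each move removes
   at least one vertex). *)
fun bival :: "('v \<Rightarrow> bool) \<Rightarrow> ('v \<Rightarrow> 'v \<Rightarrow> bool) \<Rightarrow> nat \<Rightarrow> bool \<Rightarrow> 'v set \<Rightarrow> int" where
  "bival bl E 0 lft U = 0"
| "bival bl E (Suc k) lft U =
     (let M = {x \<in> U. bl x = lft} in
      if M = {} then 0
      else if lft then
        Max ((\<lambda>x. int (card (removed E U x)) + bival bl E k False (U - removed E U x)) ` M)
      else
        Min ((\<lambda>x. bival bl E k True (U - removed E U x) - int (card (removed E U x))) ` M))"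

definition iso_credit :: "'v pos \<Rightarrow> int" where
  "iso_credit G = (case G of (V, bl, E) \<Rightarrow>
     int (card {v \<in> isolated E V. bl v}) - int (card {v \<in> isolated E V. \<not> bl v}))"

definition Ls :: "'v pos \<Rightarrow> int" where
  "Ls G = (case G of (V, bl, E) \<Rightarrow> iso_credit G + bival bl E (card V) True (V - isolated E V))"

definition Rs :: "'v pos \<Rightarrow> int" where
  "Rs G = (case G of (V, bl, E) \<Rightarrow> iso_credit G + bival bl E (card V) False (V - isolated E V))"

definition copies :: "nat \<Rightarrow> 'v pos \<Rightarrow> (nat \<times> 'v) pos" where
  "copies p G = (case G of (V, bl, E) \<Rightarrow>
     ({0..<p} \<times> V, (\<lambda>(c, v). bl v), (\<lambda>(c, v) (d, w). c = d \<and> E v w)))"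

definition mean :: "'v pos \<Rightarrow> real" where
  "mean G = lim (\<lambda>p. real_of_int (Ls (copies p G)) / real p)"

definition segment :: "int \<Rightarrow> nat pos" where
  "segment n = ({1..nat \<bar>n\<bar>},
                (\<lambda>i. if n > 0 then odd i else even i),
                (\<lambda>i j. i = j + 1 \<or> j = i + 1))"

end

theory Submission
  imports Defs
begin

text \<open>
  On a bipartite position without isolated vertices an extra Right move never raises the score.
  This and Rs \<le> Ls (nonzugzwang) are proved by a simultaneous induction, and nonzugzwang makes Ls
  subadditive on disjoint unions, so by Fekete's lemma Ls(pS_n)/p converges; its limit is the mean.

  For \<bar>n\<bar> \<ge> 2 the position pS_n is a union of paths, and the number \<Phi> of black vertices
  without a right neighbour is a potential: the gain of a Left move plus the increase of \<Phi> is at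
  most a local quantity (at most 4), and some Right move has gain minus increase of \<Phi> at least
  that quantity. Hence Rs \<le> \<Phi> and Ls \<le> \<Phi> + 4. The smaller of the values of \<Phi> on pS_n and on
  its mirror image is p[n odd, n > 0]; together with swapping colours this gives
  -p[n odd, n < 0] \<le> Ls(pS_n) \<le> p[n odd, n > 0] + 4.
\<close>

section \<open>Optimal scores\<close>

definition move :: "('v \<Rightarrow> 'v \<Rightarrow> bool) \<Rightarrow> 'v set \<Rightarrow> 'v \<Rightarrow> 'v set" where
  "move E U x = U - removed E U x"

definition gain :: "('v \<Rightarrow> 'v \<Rightarrow> bool) \<Rightarrow> 'v set \<Rightarrow> 'v \<Rightarrow> int" where
  "gain E U x = int (card U) - int (card (move E U x))"

definition score :: "('v \<Rightarrow> bool) \<Rightarrow> ('v \<Rightarrow> 'v \<Rightarrow> bool) \<Rightarrow> bool \<Rightarrow> 'v set \<Rightarrow> int" where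
  "score bl E lft U = bival bl E (card U) lft U"

lemma removed_subset: "x \<in> U \<Longrightarrow> removed E U x \<subseteq> U"
  unfolding removed_def nbhd_def isolated_def Let_def by auto

lemma move_subset: "move E U x \<subseteq> U"
  unfolding move_def by auto

lemma finite_move: "finite U \<Longrightarrow> finite (move E U x)"
  using move_subset finite_subset by metis

lemma card_move_less: "finite U \<Longrightarrow> x \<in> U \<Longrightarrow> card (move E U x) < card U"
  unfolding move_def removed_def Let_def by (rule psubset_card_mono) auto

lemma card_move_le: "finite U \<Longrightarrow> card (move E U x) \<le> card U"
  by (rule card_mono) (auto simp: move_subset)

lemma gain_eq_card_removed: "finite U \<Longrightarrow> x \<in> U \<Longrightarrow> gain E U x = int (card (removed E U x))"
  unfolding gain_def move_def
  using removed_subset[of x U E] by (simp add: card_Diff_subset finite_subset of_nat_diff card_mono)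

lemma gain_eq_card_diff: "finite U \<Longrightarrow> gain E U x = int (card (U - move E U x))"
  unfolding gain_def by (simp add: card_Diff_subset finite_move move_subset card_move_le)

lemma gain_move_comm:
  "move E (move E U x) y = move E (move E U y) x \<Longrightarrow>
    gain E U x + gain E (move E U x) y = gain E U y + gain E (move E U y) x"
  unfolding gain_def by simp

lemma bival_Suc_eq:
  "finite U \<Longrightarrow> card U \<le> k \<Longrightarrow> bival bl E (Suc k) lft U = bival bl E k lft U"
proof (induction k arbitrary: U lft)
  case 0
  then show ?case by simp
next
  case (Suc k)
  have IH: "bival bl E (Suc k) l (U - removed E U x) = bival bl E k l (U - removed E U x)"
    if "x \<in> U" for x l
    using Suc.IH[of "move E U x"] Suc.prems card_move_less[OF Suc.prems(1) that, of E]
    by (simp add: finite_move move_def)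
  let ?M = "{x \<in> U. bl x = lft}"
  have "(\<lambda>x. int (card (removed E U x)) + bival bl E (Suc k) False (U - removed E U x)) ` ?M
      = (\<lambda>x. int (card (removed E U x)) + bival bl E k False (U - removed E U x)) ` ?M"
       "(\<lambda>x. bival bl E (Suc k) True (U - removed E U x) - int (card (removed E U x))) ` ?M
      = (\<lambda>x. bival bl E k True (U - removed E U x) - int (card (removed E U x))) ` ?M"
    using IH by (auto intro!: image_cong simp del: bival.simps)
  then show ?case
    unfolding bival.simps(2)[of bl E "Suc k" lft U] bival.simps(2)[of bl E k lft U] Let_def
    by (simp only:)
qed

lemma bival_eq_score:
  assumes "finite U" "card U \<le> k"
  shows "bival bl E k lft U = score bl E lft U"
  using assms(2) unfolding score_def
proof (induction k rule: dec_induct)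
  case (step k)
  then show ?case using bival_Suc_eq[OF assms(1)] by (simp del: bival.simps)
qed simp

lemma bival_empty: "bival bl E k lft {} = 0"
  by (cases k) auto

lemma score_empty: "score bl E lft {} = 0"
  by (simp add: score_def)

lemma score_unfold:
  assumes "finite U"
  shows "score bl E lft U =
     (if {x \<in> U. bl x = lft} = {} then 0
      else if lft then Max ((\<lambda>x. gain E U x + score bl E False (move E U x)) ` {x \<in> U. bl x = lft})
      else Min ((\<lambda>x. score bl E True (move E U x) - gain E U x) ` {x \<in> U. bl x = lft}))"
proof (cases "U = {}")
  case True
  then show ?thesis by (simp add: score_empty)
next
  case False
  then have "card U > 0" using assms by auto
  then obtain k where k: "card U = Suc k" using gr0_conv_Suc by blast
  let ?M = "{x \<in> U. bl x = lft}"
  have fuel: "bival bl E k l (U - removed E U x) = score bl E l (move E U x)" if "x \<in> U" for x l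
    using bival_eq_score[of "move E U x" k bl E l] finite_move[OF assms] card_move_less[OF assms that, of E] k
    by (simp add: move_def del: bival.simps)
  have "(\<lambda>x. int (card (removed E U x)) + bival bl E k False (U - removed E U x)) ` ?M
      = (\<lambda>x. gain E U x + score bl E False (move E U x)) ` ?M"
       "(\<lambda>x. bival bl E k True (U - removed E U x) - int (card (removed E U x))) ` ?M
      = (\<lambda>x. score bl E True (move E U x) - gain E U x) ` ?M"
    using fuel gain_eq_card_removed[OF assms] by (auto intro!: image_cong simp del: bival.simps)
  then show ?thesis
    unfolding score_def[of bl E lft U] k bival.simps(2)[of bl E k lft U] Let_def by (simp only:)
qed

lemma score_Left_no_move: "finite U \<Longrightarrow> \<forall>x\<in>U. \<not> bl x \<Longrightarrow> score bl E True U = 0"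
  by (subst score_unfold) auto

lemma score_Right_no_move: "finite U \<Longrightarrow> \<forall>x\<in>U. bl x \<Longrightarrow> score bl E False U = 0"
  by (subst score_unfold) auto

lemma score_Left_eq_Max:
  assumes "finite U" "x \<in> U" "bl x"
  shows "score bl E True U = Max ((\<lambda>x. gain E U x + score bl E False (move E U x)) ` {x \<in> U. bl x})"
  using assms by (subst score_unfold) auto

lemma score_Right_eq_Min:
  assumes "finite U" "y \<in> U" "\<not> bl y"
  shows "score bl E False U = Min ((\<lambda>y. score bl E True (move E U y) - gain E U y) ` {y \<in> U. \<not> bl y})"
  using assms by (subst score_unfold) auto

lemma score_Left_ge_move:
  "finite U \<Longrightarrow> x \<in> U \<Longrightarrow> bl x \<Longrightarrow> gain E U x + score bl E False (move E U x) \<le> score bl E True U"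
  by (simp add: score_Left_eq_Max)

lemma score_Right_le_move:
  "finite U \<Longrightarrow> y \<in> U \<Longrightarrow> \<not> bl y \<Longrightarrow> score bl E False U \<le> score bl E True (move E U y) - gain E U y"
  by (simp add: score_Right_eq_Min)

lemma score_Left_attained:
  assumes "finite U" "x0 \<in> U" "bl x0"
  obtains x where "x \<in> U" "bl x" "score bl E True U = gain E U x + score bl E False (move E U x)"
proof -
  have "score bl E True U \<in> (\<lambda>x. gain E U x + score bl E False (move E U x)) ` {x \<in> U. bl x}"
    unfolding score_Left_eq_Max[of U x0 bl E, OF assms] using assms by (intro Max_in) auto
  then show ?thesis using that by auto
qed

lemma score_Right_attained:
  assumes "finite U" "y0 \<in> U" "\<not> bl y0"
  obtains y where "y \<in> U" "\<not> bl y" "score bl E False U = score bl E True (move E U y) - gain E U y"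
proof -
  have "score bl E False U \<in> (\<lambda>y. score bl E True (move E U y) - gain E U y) ` {y \<in> U. \<not> bl y}"
    unfolding score_Right_eq_Min[of U y0 bl E, OF assms] using assms by (intro Min_in) auto
  then show ?thesis using that by auto
qed

lemma abs_score_le_card: "finite U \<Longrightarrow> \<bar>score bl E lft U\<bar> \<le> int (card U)"
proof (induction "card U" arbitrary: U lft rule: less_induct)
  case less
  have IH: "\<bar>score bl E l (move E U x)\<bar> \<le> int (card (move E U x))" if "x \<in> U" for x l
    using less.hyps[OF card_move_less[OF less.prems that]] finite_move[OF less.prems] by blast
  show ?case
  proof (cases lft)
    case True
    show ?thesis
    proof (cases "\<exists>x\<in>U. bl x")
      case False
      then show ?thesis using score_Left_no_move[OF less.prems] True by simp
    next
      case True
      then obtain x0 where "x0 \<in> U" "bl x0" by blast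
      then obtain x where "x \<in> U" "score bl E True U = gain E U x + score bl E False (move E U x)"
        using score_Left_attained[OF less.prems] by metis
      then show ?thesis
        using IH[of x False] card_move_le[OF less.prems, of E x] \<open>lft\<close> unfolding gain_def by auto
    qed
  next
    case False
    show ?thesis
    proof (cases "\<exists>y\<in>U. \<not> bl y")
      case False
      then show ?thesis using score_Right_no_move[OF less.prems] \<open>\<not> lft\<close> by simp
    next
      case True
      then obtain y0 where "y0 \<in> U" "\<not> bl y0" by blast
      then obtain y where "y \<in> U" "score bl E False U = score bl E True (move E U y) - gain E U y"
        using score_Right_attained[OF less.prems] by metis
      then show ?thesis
        using IH[of y True] card_move_le[OF less.prems, of E y] \<open>\<not> lft\<close> unfolding gain_def by auto
    qed
  qed
qed

lemma Max_uminus_image: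
  fixes A :: "'a :: linordered_ab_group_add set"
  shows "finite A \<Longrightarrow> A \<noteq> {} \<Longrightarrow> Max (uminus ` A) = - Min A"
  by (rule Max_eqI) auto

lemma Min_uminus_image:
  fixes A :: "'a :: linordered_ab_group_add set"
  shows "finite A \<Longrightarrow> A \<noteq> {} \<Longrightarrow> Min (uminus ` A) = - Max A"
  by (rule Min_eqI) auto

lemma score_swap_colours: "finite U \<Longrightarrow> score (\<lambda>v. \<not> bl v) E lft U = - score bl E (\<not> lft) U"
proof (induction "card U" arbitrary: U lft rule: less_induct)
  case less
  note fin = less.prems
  have IH: "score (\<lambda>v. \<not> bl v) E l (move E U x) = - score bl E (\<not> l) (move E U x)" if "x \<in> U" for x l
    using less.hyps[OF card_move_less[OF fin that]] finite_move[OF fin] by blast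
  show ?case
  proof (cases "\<exists>x\<in>U. bl x \<noteq> lft")
    case False
    then show ?thesis
      using score_Left_no_move[OF fin] score_Right_no_move[OF fin] by (cases lft) auto
  next
    case True
    then obtain x0 where x0: "x0 \<in> U" "bl x0 \<noteq> lft" by blast
    let ?M = "{x \<in> U. bl x \<noteq> lft}"
    have ne: "finite (f ` ?M)" "f ` ?M \<noteq> {}" for f :: "'a \<Rightarrow> int"
      using fin x0 by auto
    show ?thesis
    proof (cases lft)
      case True
      have "(\<lambda>x. gain E U x + score (\<lambda>v. \<not> bl v) E False (move E U x)) ` ?M
          = uminus ` (\<lambda>y. score bl E True (move E U y) - gain E U y) ` ?M"
        unfolding image_image using IH by (intro image_cong) auto
      then show ?thesis
        using True x0 score_Left_eq_Max[OF fin x0(1), of "\<lambda>v. \<not> bl v" E]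
          score_Right_eq_Min[OF fin x0(1), of bl E] Max_uminus_image[OF ne]
        by simp
    next
      case False
      have "(\<lambda>y. score (\<lambda>v. \<not> bl v) E True (move E U y) - gain E U y) ` ?M
          = uminus ` (\<lambda>x. gain E U x + score bl E False (move E U x)) ` ?M"
        unfolding image_image using IH by (intro image_cong) auto
      then show ?thesis
        using False x0 score_Right_eq_Min[OF fin x0(1), of "\<lambda>v. \<not> bl v" E]
          score_Left_eq_Max[OF fin x0(1), of bl E] Min_uminus_image[OF ne]
        by simp
    qed
  qed
qed

definition closed_nbhd :: "('v \<Rightarrow> 'v \<Rightarrow> bool) \<Rightarrow> 'v \<Rightarrow> 'v set" where
  "closed_nbhd E x = insert x {z. E x z}"

definition prune :: "('v \<Rightarrow> 'v \<Rightarrow> bool) \<Rightarrow> 'v set \<Rightarrow> 'v set \<Rightarrow> 'v set" where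
  "prune E U S = (U - S) - isolated E (U - S)"

lemma move_eq_prune: "move E U x = prune E U (closed_nbhd E x)"
  unfolding move_def removed_def closed_nbhd_def prune_def nbhd_def Let_def isolated_def by auto

lemma image_isolated:
  assumes "\<And>u v. u \<in> U \<Longrightarrow> v \<in> U \<Longrightarrow> E' (f u) (f v) = E u v" "W \<subseteq> U"
  shows "f ` isolated E W = isolated E' (f ` W)"
proof
  show "f ` isolated E W \<subseteq> isolated E' (f ` W)"
    unfolding isolated_def using assms by auto
  show "isolated E' (f ` W) \<subseteq> f ` isolated E W"
    unfolding isolated_def using assms by (auto simp: subset_iff)
qed

lemma image_move:
  assumes inj: "inj_on f U" and E': "\<And>u v. u \<in> U \<Longrightarrow> v \<in> U \<Longrightarrow> E' (f u) (f v) = E u v"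
    and x: "x \<in> U"
  shows "f ` move E U x = move E' (f ` U) (f x)"
proof -
  let ?W = "U - closed_nbhd E x"
  have "u \<in> closed_nbhd E x \<longleftrightarrow> f u \<in> closed_nbhd E' (f x)" if "u \<in> U" for u
    using inj_on_eq_iff[OF inj that x] E'[OF x that] unfolding closed_nbhd_def by auto
  then have W: "f ` ?W = f ` U - closed_nbhd E' (f x)"
    by blast
  have "f ` move E U x = f ` ?W - f ` isolated E ?W"
    unfolding move_eq_prune prune_def
    using inj by (intro inj_on_image_set_diff) (auto simp: isolated_def)
  also have "\<dots> = move E' (f ` U) (f x)"
    using image_isolated[of U E' f E ?W, OF E'] unfolding move_eq_prune prune_def W by auto
  finally show ?thesis .
qed

lemma score_image:
  assumes "finite U" and "inj_on f U" and "\<And>u v. u \<in> U \<Longrightarrow> v \<in> U \<Longrightarrow> E' (f u) (f v) = E u v"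
    and "\<And>u. u \<in> U \<Longrightarrow> bl' (f u) = bl u"
  shows "score bl' E' lft (f ` U) = score bl E lft U"
  using assms
proof (induction "card U" arbitrary: U lft rule: less_induct)
  case less
  note fin = less.prems(1) and inj = less.prems(2) and E' = less.prems(3) and bl' = less.prems(4)
  have move_f: "move E' (f ` U) (f x) = f ` move E U x" if "x \<in> U" for x
    using image_move[of f U E' E x, OF inj E' that] by simp
  have IH: "score bl' E' l (move E' (f ` U) (f x)) = score bl E l (move E U x)" if "x \<in> U" for x l
    unfolding move_f[OF that]
    using move_subset[of E U x] inj_on_subset[OF inj] E' bl'
    by (intro less.hyps card_move_less[OF fin that] finite_move[OF fin]) blast+
  have gain_f: "gain E' (f ` U) (f x) = gain E U x" if "x \<in> U" for x
    using inj_on_subset[OF inj move_subset] card_image inj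
    unfolding gain_def move_f[OF that] by metis
  let ?M = "{x \<in> U. bl x = lft}"
  have M: "{y \<in> f ` U. bl' y = lft} = f ` ?M"
    using bl' by auto
  have "(\<lambda>x. gain E' (f ` U) (f x) + score bl' E' False (move E' (f ` U) (f x))) ` ?M
      = (\<lambda>x. gain E U x + score bl E False (move E U x)) ` ?M"
       "(\<lambda>x. score bl' E' True (move E' (f ` U) (f x)) - gain E' (f ` U) (f x)) ` ?M
      = (\<lambda>x. score bl E True (move E U x) - gain E U x) ` ?M"
    using IH gain_f by (auto intro!: image_cong)
  then show ?case
    unfolding score_unfold[OF finite_imageI[OF fin]] score_unfold[OF fin] M image_is_empty image_image
    by (simp only:)
qed

section \<open>Bipartite positions: nonzugzwang and subadditivity\<close>

definition right_move_dominates_pass :: "('v \<Rightarrow> bool) \<Rightarrow> ('v \<Rightarrow> 'v \<Rightarrow> bool) \<Rightarrow> bool \<Rightarrow> 'v set \<Rightarrow> bool" where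
  "right_move_dominates_pass bl E lft U \<longleftrightarrow>
     (\<forall>y\<in>U. \<not> bl y \<longrightarrow> score bl E lft (move E U y) - gain E U y \<le> score bl E lft U)"

definition separated :: "('v \<Rightarrow> 'v \<Rightarrow> bool) \<Rightarrow> 'v set \<Rightarrow> 'v set \<Rightarrow> bool" where
  "separated E A B \<longleftrightarrow> A \<inter> B = {} \<and> (\<forall>a\<in>A. \<forall>b\<in>B. \<not> E a b)"

locale bipartite =
  fixes bl :: "'v \<Rightarrow> bool" and E :: "'v \<Rightarrow> 'v \<Rightarrow> bool"
  assumes edge_sym: "E x y \<Longrightarrow> E y x" and edge_colours: "E x y \<Longrightarrow> bl x \<noteq> bl y"
begin

lemma isolated_prune: "isolated E (prune E U S) = {}"
  unfolding prune_def isolated_def using edge_sym by blast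

lemma prune_prune: "prune E (prune E U A) B = prune E U (A \<union> B)"
  unfolding prune_def isolated_def using edge_sym by blast

lemma isolated_move: "isolated E (move E U x) = {}"
  unfolding move_eq_prune by (rule isolated_prune)

lemma move_move: "move E (move E U x) y = prune E U (closed_nbhd E x \<union> closed_nbhd E y)"
  unfolding move_eq_prune prune_prune ..

lemma move_comm: "move E (move E U x) y = move E (move E U y) x"
  unfolding move_move by (simp add: Un_commute)

lemma exists_both_colours:
  assumes "isolated E U = {}" "v \<in> U"
  shows "\<exists>x\<in>U. bl x" "\<exists>y\<in>U. \<not> bl y"
proof -
  obtain w where "w \<in> U" "E v w" using assms unfolding isolated_def by auto
  then have "bl v \<noteq> bl w" using edge_colours by blast
  then show "\<exists>x\<in>U. bl x" "\<exists>y\<in>U. \<not> bl y" using \<open>w \<in> U\<close> assms(2) by (cases "bl v"; auto)+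
qed

lemma not_edge_of_mem_move: "x \<in> move E U y \<Longrightarrow> \<not> E y x"
  unfolding move_eq_prune prune_def closed_nbhd_def by auto

text \<open>If \<open>y\<close> is removed by a move at a non-neighbour \<open>z\<close>, then it became isolated,
  so all its neighbours are gone as well and a later move at \<open>y\<close> removes nothing.\<close>
lemma move_move_eq_of_not_mem:
  assumes "y \<in> U" "y \<notin> move E U z" "\<not> E z y"
  shows "move E (move E U z) y = move E U z"
proof -
  have "y \<in> isolated E (U - closed_nbhd E z) \<or> y = z"
    using assms unfolding move_eq_prune prune_def closed_nbhd_def by auto
  then have "move E U z \<inter> closed_nbhd E y = {}"
    using edge_sym unfolding move_eq_prune prune_def isolated_def closed_nbhd_def by blast
  then show ?thesis
    using isolated_move[of U z] unfolding move_eq_prune[of E "move E U z" y] prune_def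
    by (simp add: Diff_triv)
qed

lemma move_diff_move_subset:
  assumes "bl x" "\<not> bl y"
  shows "move E U y - move E (move E U y) x \<subseteq> U - move E U x"
proof
  let ?Nx = "closed_nbhd E x" and ?Ny = "closed_nbhd E y"
  fix v assume v: "v \<in> move E U y - move E (move E U y) x"
  show "v \<in> U - move E U x"
  proof (rule ccontr)
    assume "v \<notin> U - move E U x"
    then have vx: "v \<in> prune E U ?Nx" using v move_subset[of E U y] unfolding move_eq_prune by blast
    have vy: "v \<in> prune E U ?Ny" using v unfolding move_eq_prune by blast
    have vi: "v \<in> isolated E (U - (?Nx \<union> ?Ny))"
      using v vx vy unfolding move_move prune_def by (auto simp: Un_commute)
    obtain w where w: "w \<in> U - ?Nx" "E v w" using vx unfolding prune_def isolated_def by auto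
    have "w \<in> ?Ny" using vi w unfolding isolated_def by auto
    moreover have "w \<noteq> y" using w vy edge_sym unfolding prune_def closed_nbhd_def by auto
    ultimately have "E y w" unfolding closed_nbhd_def by auto
    then have "\<not> bl v" using edge_colours assms(2) w(2) by blast
    obtain w' where w': "w' \<in> U - ?Ny" "E v w'" using vy unfolding prune_def isolated_def by auto
    have "w' \<in> ?Nx" using vi w' unfolding isolated_def by auto
    moreover have "w' \<noteq> x" using w' vx edge_sym unfolding prune_def closed_nbhd_def by auto
    ultimately have "E x w'" unfolding closed_nbhd_def by auto
    then have "bl v" using edge_colours assms(1) w'(2) by blast
    with \<open>\<not> bl v\<close> show False by simp
  qed
qed

lemma gain_after_move_le:
  assumes "finite U" "bl x" "\<not> bl y"
  shows "gain E (move E U y) x \<le> gain E U x"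
  unfolding gain_eq_card_diff[OF assms(1)] gain_eq_card_diff[OF finite_move[OF assms(1)]]
  using move_diff_move_subset[OF assms(2,3), of U] assms(1) by (simp add: card_mono)

lemma right_move_dominates_pass_after_move:
  assumes "right_move_dominates_pass bl E lft (move E U z)" "y \<in> U" "\<not> bl y" "\<not> E z y"
  shows "score bl E lft (move E (move E U z) y) - gain E (move E U z) y \<le> score bl E lft (move E U z)"
proof (cases "y \<in> move E U z")
  case True
  then show ?thesis using assms(1,3) unfolding right_move_dominates_pass_def by blast
next
  case False
  then show ?thesis using move_move_eq_of_not_mem[OF assms(2) False assms(4)] unfolding gain_def by simp
qed

lemma right_move_dominates_pass_Left:
  assumes fin: "finite U" and IH: "\<forall>x\<in>U. right_move_dominates_pass bl E False (move E U x)"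
  shows "right_move_dominates_pass bl E True U"
  unfolding right_move_dominates_pass_def
proof (intro ballI impI)
  fix y assume y: "y \<in> U" "\<not> bl y"
  let ?V = "move E U y"
  show "score bl E True ?V - gain E U y \<le> score bl E True U"
  proof (cases "\<exists>x\<in>?V. bl x")
    case False
    then have "?V = {}" using exists_both_colours(1)[OF isolated_move] by blast
    then show ?thesis
      using abs_score_le_card[OF fin, of bl E True] unfolding gain_def by (simp add: score_empty)
  next
    case True
    then obtain x0 where x0: "x0 \<in> ?V" "bl x0" by blast
    obtain x where x: "x \<in> ?V" "bl x"
      "score bl E True ?V = gain E ?V x + score bl E False (move E ?V x)"
      using score_Left_attained[of ?V x0 bl E, OF finite_move[OF fin] x0] by blast
    have xU: "x \<in> U" using x(1) move_subset[of E U y] by blast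
    have "\<not> E x y" using not_edge_of_mem_move[OF x(1)] edge_sym by blast
    then have "score bl E False (move E ?V x) - gain E (move E U x) y \<le> score bl E False (move E U x)"
      using right_move_dominates_pass_after_move[OF IH[rule_format, OF xU] y] move_comm[of U x y] by simp
    moreover have "gain E U x + score bl E False (move E U x) \<le> score bl E True U"
      using score_Left_ge_move[of U x bl E, OF fin xU x(2)] .
    ultimately show ?thesis
      using x(3) gain_move_comm[OF move_comm, of U x y] gain_after_move_le[OF fin x(2) y(2)] by linarith
  qed
qed

lemma right_move_dominates_pass_Right:
  assumes fin: "finite U"
    and IH: "\<forall>z\<in>U. right_move_dominates_pass bl E True (move E U z)"
    and nonzugzwang: "\<forall>z\<in>U. score bl E False (move E U z) \<le> score bl E True (move E U z)"
  shows "right_move_dominates_pass bl E False U"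
  unfolding right_move_dominates_pass_def
proof (intro ballI impI)
  fix y assume y: "y \<in> U" "\<not> bl y"
  let ?V = "move E U y"
  obtain z where z: "z \<in> U" "\<not> bl z" "score bl E False U = score bl E True (move E U z) - gain E U z"
    using score_Right_attained[of U y bl E, OF fin y] by blast
  have "\<not> E z y" "\<not> E y z" using edge_colours y(2) z(2) by blast+
  have "score bl E False ?V \<le> score bl E True (move E ?V z) - gain E ?V z"
  proof (cases "z \<in> ?V")
    case True
    then show ?thesis by (rule score_Right_le_move[of ?V z bl E, OF finite_move[OF fin] _ z(2)])
  next
    case False
    have "move E ?V z = ?V" using move_move_eq_of_not_mem[OF z(1) False \<open>\<not> E y z\<close>] .
    then show ?thesis using nonzugzwang y(1) unfolding gain_def by simp
  qed
  moreover have "score bl E True (move E ?V z) - gain E (move E U z) y \<le> score bl E True (move E U z)"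
    using right_move_dominates_pass_after_move[OF IH[rule_format, OF z(1)] y \<open>\<not> E z y\<close>]
      move_comm[of U z y] by simp
  ultimately show "score bl E False ?V - gain E U y \<le> score bl E False U"
    using z(3) gain_move_comm[OF move_comm, of U y z] by linarith
qed

lemma score_Right_le_Left_if_dominates:
  assumes fin: "finite U" and "isolated E U = {}" "right_move_dominates_pass bl E True U"
  shows "score bl E False U \<le> score bl E True U"
proof (cases "U = {}")
  case True
  then show ?thesis by (simp add: score_empty)
next
  case False
  then obtain y0 where y0: "y0 \<in> U" "\<not> bl y0" using exists_both_colours(2)[OF assms(2)] by blast
  obtain y where "y \<in> U" "\<not> bl y" "score bl E False U = score bl E True (move E U y) - gain E U y"
    using score_Right_attained[of U y0 bl E, OF fin y0] by blast
  then show ?thesis using assms(3) unfolding right_move_dominates_pass_def by simp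
qed

lemma right_move_dominates_pass: "finite U \<Longrightarrow> right_move_dominates_pass bl E lft U"
proof (induction "card U" arbitrary: U lft rule: less_induct)
  case less
  have IH: "right_move_dominates_pass bl E l (move E U x)" if "x \<in> U" for x l
    using less.hyps[OF card_move_less[OF less.prems that]] finite_move[OF less.prems] by blast
  have "score bl E False (move E U x) \<le> score bl E True (move E U x)" if "x \<in> U" for x
    using score_Right_le_Left_if_dominates[OF finite_move[OF less.prems] isolated_move IH[OF that]] .
  then show ?case
    using right_move_dominates_pass_Left[OF less.prems] right_move_dominates_pass_Right[OF less.prems] IH
    by (cases lft) auto
qed

theorem score_Right_le_Left: "finite U \<Longrightarrow> isolated E U = {} \<Longrightarrow> score bl E False U \<le> score bl E True U"
  using score_Right_le_Left_if_dominates right_move_dominates_pass by blast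

lemma separated_sym: "separated E A B \<Longrightarrow> separated E B A"
  unfolding separated_def using edge_sym by blast

lemma separated_move: "separated E A B \<Longrightarrow> separated E (move E A x) B"
  unfolding separated_def using move_subset[of E A x] by blast

lemma move_Un_separated:
  assumes "separated E A B" "isolated E B = {}" "x \<in> A"
  shows "move E (A \<union> B) x = move E A x \<union> B"
proof -
  have "(A \<union> B) - closed_nbhd E x = (A - closed_nbhd E x) \<union> B"
    using assms unfolding separated_def closed_nbhd_def by auto
  moreover have "isolated E ((A - closed_nbhd E x) \<union> B) = isolated E (A - closed_nbhd E x)"
    using assms(1,2) unfolding separated_def isolated_def by auto
  moreover have "isolated E (A - closed_nbhd E x) \<inter> B = {}"
    using assms(1) unfolding separated_def isolated_def by auto
  ultimately show ?thesis
    unfolding move_eq_prune prune_def by auto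
qed

lemma gain_Un_separated:
  assumes "finite A" "finite B" "separated E A B" "isolated E B = {}" "x \<in> A"
  shows "gain E (A \<union> B) x = gain E A x"
proof -
  have "A \<inter> B = {}" "move E A x \<inter> B = {}"
    using assms(3) move_subset[of E A x] unfolding separated_def by auto
  then show ?thesis
    unfolding gain_def move_Un_separated[OF assms(3-5)]
    using assms(1,2) by (simp add: card_Un_disjoint finite_move)
qed

lemma score_Un_le_Left_step:
  assumes finA: "finite A" and finB: "finite B" and isoA: "isolated E A = {}" and isoB: "isolated E B = {}"
    and sep: "separated E A B"
    and IHA: "\<forall>x\<in>A. score bl E False (move E A x \<union> B) \<le> score bl E False (move E A x) + score bl E True B"
    and IHB: "\<forall>x\<in>B. score bl E False (move E B x \<union> A) \<le> score bl E False (move E B x) + score bl E True A"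
  shows "score bl E True (A \<union> B) \<le> score bl E True A + score bl E True B"
proof (cases "\<exists>x\<in>A \<union> B. bl x")
  case False
  then have "A = {}" "B = {}"
    using exists_both_colours(1)[OF isoA] exists_both_colours(1)[OF isoB] by blast+
  then show ?thesis by (simp add: score_empty)
next
  case True
  then obtain x0 where x0: "x0 \<in> A \<union> B" "bl x0" by blast
  obtain x where x: "x \<in> A \<union> B" "bl x"
    "score bl E True (A \<union> B) = gain E (A \<union> B) x + score bl E False (move E (A \<union> B) x)"
    using score_Left_attained[of "A \<union> B" x0 bl E, OF _ x0] finA finB by blast
  show ?thesis
  proof (cases "x \<in> A")
    case True
    then show ?thesis
      using x(3) IHA score_Left_ge_move[of A x bl E, OF finA True x(2)]
      unfolding move_Un_separated[OF sep isoB True] gain_Un_separated[OF finA finB sep isoB True]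
      by fastforce
  next
    case False
    then have xB: "x \<in> B" using x(1) by blast
    then show ?thesis
      using x(3) IHB score_Left_ge_move[of B x bl E, OF finB xB x(2)]
      unfolding Un_commute[of A B] move_Un_separated[OF separated_sym[OF sep] isoA xB]
        gain_Un_separated[OF finB finA separated_sym[OF sep] isoA xB]
      by fastforce
  qed
qed

lemma score_Un_le_Right_step:
  assumes finA: "finite A" and finB: "finite B" and isoA: "isolated E A = {}" and isoB: "isolated E B = {}"
    and sep: "separated E A B"
    and IH: "\<forall>z\<in>A. score bl E True (move E A z \<union> B) \<le> score bl E True (move E A z) + score bl E True B"
  shows "score bl E False (A \<union> B) \<le> score bl E False A + score bl E True B"
proof (cases "A = {}")
  case True
  then show ?thesis using score_Right_le_Left[OF finB isoB] by (simp add: score_empty)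
next
  case False
  then obtain z0 where z0: "z0 \<in> A" "\<not> bl z0" using exists_both_colours(2)[OF isoA] by blast
  obtain z where z: "z \<in> A" "\<not> bl z" "score bl E False A = score bl E True (move E A z) - gain E A z"
    using score_Right_attained[of A z0 bl E, OF finA z0] by blast
  have "score bl E False (A \<union> B) \<le> score bl E True (move E A z \<union> B) - gain E A z"
    using score_Right_le_move[of "A \<union> B" z bl E, OF _ _ z(2)] z(1) finA finB
    unfolding move_Un_separated[OF sep isoB z(1)] gain_Un_separated[OF finA finB sep isoB z(1)] by blast
  then show ?thesis using IH z(1) z(3) by fastforce
qed

theorem score_Un_le:
  "finite A \<Longrightarrow> finite B \<Longrightarrow> isolated E A = {} \<Longrightarrow> isolated E B = {} \<Longrightarrow> separated E A B
   \<Longrightarrow> score bl E True (A \<union> B) \<le> score bl E True A + score bl E True B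
     \<and> score bl E False (A \<union> B) \<le> score bl E False A + score bl E True B"
proof (induction "card A + card B" arbitrary: A B rule: less_induct)
  case less
  note prems = less.prems
  have "score bl E l (move E A x \<union> B) \<le> score bl E l (move E A x) + score bl E True B" if "x \<in> A" for x l
    using less.hyps[of "move E A x" B] card_move_less[OF prems(1) that] finite_move[OF prems(1)] prems(2,4)
      isolated_move separated_move[OF prems(5)] by (cases l) auto
  moreover have "score bl E False (move E B x \<union> A) \<le> score bl E False (move E B x) + score bl E True A"
    if "x \<in> B" for x
    using less.hyps[of "move E B x" A] card_move_less[OF prems(2) that] finite_move[OF prems(2)] prems(1,3)
      isolated_move separated_move[OF separated_sym[OF prems(5)]] by auto
  ultimately show ?case
    using score_Un_le_Left_step[OF prems] score_Un_le_Right_step[OF prems] by blast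
qed

end

section \<open>Unions of paths: a potential bound\<close>

definition path_edge :: "nat \<times> int \<Rightarrow> nat \<times> int \<Rightarrow> bool" where
  "path_edge u v \<longleftrightarrow> fst u = fst v \<and> (snd u = snd v + 1 \<or> snd v = snd u + 1)"

definition parity_colour :: "bool \<Rightarrow> nat \<times> int \<Rightarrow> bool" where
  "parity_colour s v \<longleftrightarrow> odd (snd v) = s"

lemma bipartite_path: "bipartite (parity_colour s) path_edge"
  by unfold_locales (auto simp: path_edge_def parity_colour_def)

lemma path_edge_iff: "path_edge (c, j) w \<longleftrightarrow> w = (c, j - 1) \<or> w = (c, j + 1)"
  unfolding path_edge_def by (cases w) auto

lemma mem_move_path:
  "(c', j) \<in> move path_edge U (c, i) \<longleftrightarrow> (c', j) \<in> U \<and> \<not> (c' = c \<and> \<bar>j - i\<bar> \<le> 1)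
     \<and> (((c', j - 1) \<in> U \<and> \<not> (c' = c \<and> \<bar>j - 1 - i\<bar> \<le> 1))
        \<or> ((c', j + 1) \<in> U \<and> \<not> (c' = c \<and> \<bar>j + 1 - i\<bar> \<le> 1)))"
proof -
  let ?N = "closed_nbhd path_edge (c, i)"
  have N: "w \<in> ?N \<longleftrightarrow> fst w = c \<and> \<bar>snd w - i\<bar> \<le> 1" for w
    unfolding closed_nbhd_def path_edge_def by (cases w) auto
  have "(c', j) \<in> move path_edge U (c, i) \<longleftrightarrow> (c', j) \<in> U - ?N \<and> (\<exists>w\<in>U - ?N. path_edge (c', j) w)"
    unfolding move_eq_prune prune_def isolated_def by blast
  also have "(\<exists>w\<in>U - ?N. path_edge (c', j) w) \<longleftrightarrow> (c', j - 1) \<in> U - ?N \<or> (c', j + 1) \<in> U - ?N"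
    unfolding path_edge_iff by blast
  finally show ?thesis unfolding Diff_iff N fst_conv snd_conv by blast
qed

lemma path_neighbour_mem:
  "isolated path_edge U = {} \<Longrightarrow> (c, j) \<in> U \<Longrightarrow> (c, j - 1) \<in> U \<or> (c, j + 1) \<in> U"
proof -
  assume "isolated path_edge U = {}" "(c, j) \<in> U"
  then have "(c, j) \<notin> isolated path_edge U" by simp
  then obtain w where "w \<in> U" "path_edge (c, j) w" using \<open>(c, j) \<in> U\<close> unfolding isolated_def by auto
  then show ?thesis unfolding path_edge_iff by auto
qed

lemma mem_move_path_far:
  assumes "isolated path_edge U = {}" "c' \<noteq> c \<or> 3 \<le> \<bar>j - i\<bar>"
  shows "(c', j) \<in> move path_edge U (c, i) \<longleftrightarrow> (c', j) \<in> U"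
  using assms path_neighbour_mem[OF assms(1), of c' j] unfolding mem_move_path by auto

definition black_right_ends :: "bool \<Rightarrow> (nat \<times> int) set \<Rightarrow> (nat \<times> int) set" where
  "black_right_ends s U = {v \<in> U. parity_colour s v \<and> (fst v, snd v + 1) \<notin> U}"

lemma card_Int_window:
  assumes "finite J"
  shows "int (card (A \<inter> (\<lambda>j. (c, i + j)) ` J)) = (\<Sum>j\<in>J. of_bool ((c, (i::int) + j) \<in> A))"
proof -
  have "A \<inter> (\<lambda>j. (c, i + j)) ` J = (\<lambda>j. (c, i + j)) ` (J \<inter> {j. (c, i + j) \<in> A})" by auto
  moreover have "inj_on (\<lambda>j. (c, i + j)) (J \<inter> {j. (c, i + j) \<in> A})" by (auto simp: inj_on_def)
  ultimately show ?thesis using assms by (simp add: card_image)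
qed

lemma card_black_right_ends_move:
  assumes fin: "finite U" and iso: "isolated path_edge U = {}"
  shows "int (card (black_right_ends s (move path_edge U (c, i)))) - int (card (black_right_ends s U))
    = (\<Sum>j\<in>{-3, -2, -1, 0, 1, 2}. of_bool ((c, i + j) \<in> black_right_ends s (move path_edge U (c, i))))
      - (\<Sum>j\<in>{-3, -2, -1, 0, 1, 2}. of_bool ((c, i + j) \<in> black_right_ends s U))"
proof -
  let ?W = "move path_edge U (c, i)"
  let ?window = "(\<lambda>j. (c, i + j)) ` {-3, -2, -1, 0, 1, 2}"
  have key: "(c', j) \<in> ?W \<longleftrightarrow> (c', j) \<in> U" "(c', j + 1) \<in> ?W \<longleftrightarrow> (c', j + 1) \<in> U"
    if "(c', j) \<notin> ?window" for c' j
  proof -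
    have "c' \<noteq> c \<or> j - i \<notin> {-3, -2, -1, 0, 1, 2}" using that by force
    then have "c' \<noteq> c \<or> (3 \<le> \<bar>j - i\<bar> \<and> 3 \<le> \<bar>j + 1 - i\<bar>)" by auto
    then show "(c', j) \<in> ?W \<longleftrightarrow> (c', j) \<in> U" "(c', j + 1) \<in> ?W \<longleftrightarrow> (c', j + 1) \<in> U"
      using mem_move_path_far[OF iso] by auto
  qed
  have outside: "black_right_ends s ?W - ?window = black_right_ends s U - ?window"
  proof (intro equalityI subsetI)
    fix v assume "v \<in> black_right_ends s ?W - ?window"
    with key[of "fst v" "snd v"] show "v \<in> black_right_ends s U - ?window"
      unfolding black_right_ends_def by auto
  next
    fix v assume "v \<in> black_right_ends s U - ?window"
    with key[of "fst v" "snd v"] show "v \<in> black_right_ends s ?W - ?window"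
      unfolding black_right_ends_def by auto
  qed
  have "finite (black_right_ends s ?W)" "finite (black_right_ends s U)"
    using fin finite_move[OF fin] unfolding black_right_ends_def by simp_all
  then have "card (black_right_ends s ?W) = card (black_right_ends s ?W \<inter> ?window) + card (black_right_ends s U - ?window)"
    "card (black_right_ends s U) = card (black_right_ends s U \<inter> ?window) + card (black_right_ends s U - ?window)"
    using card_Int_Diff outside by metis+
  then have "int (card (black_right_ends s ?W)) - int (card (black_right_ends s U))
      = int (card (black_right_ends s ?W \<inter> ?window)) - int (card (black_right_ends s U \<inter> ?window))"
    by simp
  then show ?thesis by (simp only: card_Int_window finite_insert finite.emptyI)
qed

lemma gain_move_path:
  assumes fin: "finite U" and iso: "isolated path_edge U = {}"
  shows "gain path_edge U (c, i)
    = (\<Sum>j\<in>{-2, -1, 0, 1, 2}. of_bool ((c, i + j) \<in> U - move path_edge U (c, i)))"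
proof -
  let ?W = "move path_edge U (c, i)"
  let ?window = "(\<lambda>j. (c, i + j)) ` {-2, -1, 0, 1, 2}"
  have "U - ?W \<subseteq> ?window"
  proof
    fix v assume v: "v \<in> U - ?W"
    obtain c' j where v_eq: "v = (c', j)" by (cases v)
    have "\<not> (c' \<noteq> c \<or> 3 \<le> \<bar>j - i\<bar>)"
      using mem_move_path_far[OF iso, of c' c j i] v unfolding v_eq by blast
    then have "c' = c" "\<bar>j - i\<bar> \<le> 2" by auto
    then show "v \<in> ?window"
      unfolding v_eq by (auto intro: image_eqI[where x = "j - i"])
  qed
  then have "U - ?W = (U - ?W) \<inter> ?window" by blast
  then show ?thesis
    using gain_eq_card_diff[OF fin] card_Int_window[of "{-2, -1, 0, 1, 2}" "U - ?W" c i] by simp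
qed

text \<open>Offsets relative to \<open>(c, i)\<close> make the local case analyses below independent of \<open>i\<close>.\<close>
definition occ :: "(nat \<times> int) set \<Rightarrow> nat \<Rightarrow> int \<Rightarrow> int \<Rightarrow> bool" where
  "occ U c i j \<longleftrightarrow> (c, i + j) \<in> U"

definition occ_after_move :: "(nat \<times> int) set \<Rightarrow> nat \<Rightarrow> int \<Rightarrow> int \<Rightarrow> bool" where
  "occ_after_move U c i j \<longleftrightarrow> (c, i + j) \<in> move path_edge U (c, i)"

lemma occ_after_move_iff:
  "occ_after_move U c i j \<longleftrightarrow> occ U c i j \<and> \<not> \<bar>j\<bar> \<le> 1
     \<and> ((occ U c i (j - 1) \<and> \<not> \<bar>j - 1\<bar> \<le> 1) \<or> (occ U c i (j + 1) \<and> \<not> \<bar>j + 1\<bar> \<le> 1))"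
  unfolding occ_after_move_def occ_def mem_move_path by (simp add: algebra_simps)

lemma mem_Diff_move_occ:
  "(c, i + j) \<in> U - move path_edge U (c, i) \<longleftrightarrow> occ U c i j \<and> \<not> occ_after_move U c i j"
  unfolding occ_def occ_after_move_def by simp

lemma mem_black_right_ends_occ:
  "(c, i + j) \<in> black_right_ends s U \<longleftrightarrow> occ U c i j \<and> odd (i + j) = s \<and> \<not> occ U c i (j + 1)"
  unfolding black_right_ends_def occ_def parity_colour_def by (simp add: add.assoc)

lemma mem_black_right_ends_move_occ:
  "(c, i + j) \<in> black_right_ends s (move path_edge U (c, i))
     \<longleftrightarrow> occ_after_move U c i j \<and> odd (i + j) = s \<and> \<not> occ_after_move U c i (j + 1)"
  unfolding black_right_ends_def occ_after_move_def parity_colour_def by (simp add: add.assoc)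

lemma odd_add_eq_iff: "odd (i + j) = s \<longleftrightarrow> (even j = (odd i = s))" for i j :: int
  by auto

lemma occ_neighbour: "isolated path_edge U = {} \<Longrightarrow> occ U c i j \<Longrightarrow> occ U c i (j - 1) \<or> occ U c i (j + 1)"
  unfolding occ_def using path_neighbour_mem[of U c "i + j"] by (simp add: algebra_simps)

text \<open>An upper bound for the gain of a Left move at \<open>v\<close> plus the resulting increase of the
  potential \<open>card (black_right_ends s U)\<close>.\<close>
definition left_gain_bound :: "(nat \<times> int) set \<Rightarrow> nat \<times> int \<Rightarrow> int" where
  "left_gain_bound U v = of_bool ((fst v, snd v - 1) \<in> U)
     + of_bool ((fst v, snd v - 1) \<in> U \<and> (fst v, snd v - 2) \<in> U) + 2 * of_bool ((fst v, snd v + 1) \<in> U)"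

text \<open>A lower bound for the gain of a Right move at \<open>v\<close> minus the resulting increase of the potential.\<close>
definition right_gain_bound :: "(nat \<times> int) set \<Rightarrow> nat \<times> int \<Rightarrow> int" where
  "right_gain_bound U v = 1 + of_bool ((fst v, snd v - 1) \<in> U) + of_bool ((fst v, snd v + 1) \<in> U)
     + of_bool ((fst v, snd v + 2) \<in> U \<and> (fst v, snd v + 3) \<notin> U)
     + of_bool ((fst v, snd v + 1) \<in> U \<and> (fst v, snd v + 2) \<notin> U)"

lemma left_gain_bound_occ:
  "left_gain_bound U (c, i) = of_bool (occ U c i (-1)) + of_bool (occ U c i (-1) \<and> occ U c i (-2))
     + 2 * of_bool (occ U c i 1)"
  unfolding left_gain_bound_def occ_def by simp

lemma right_gain_bound_occ:
  "right_gain_bound U (c, i + k) = 1 + of_bool (occ U c i (k - 1)) + of_bool (occ U c i (k + 1))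
     + of_bool (occ U c i (k + 2) \<and> \<not> occ U c i (k + 3)) + of_bool (occ U c i (k + 1) \<and> \<not> occ U c i (k + 2))"
  unfolding right_gain_bound_def occ_def by (simp add: algebra_simps)

lemma left_gain_bound_nonneg: "0 \<le> left_gain_bound U v"
  unfolding left_gain_bound_def by simp

lemma left_gain_bound_le_4: "left_gain_bound U v \<le> 4"
  unfolding left_gain_bound_def by simp

lemma left_gain_bound_mono: "W \<subseteq> U \<Longrightarrow> left_gain_bound W v \<le> left_gain_bound U v"
  unfolding left_gain_bound_def by (auto simp: of_bool_def split: if_splits)

text \<open>Both bounds only involve vertices at distance at most 3 from the move, so they reduce
  to a finite case distinction on which of these positions are occupied.\<close>
lemma left_move_bound:
  assumes fin: "finite U" and iso: "isolated path_edge U = {}"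
    and x: "(c, i) \<in> U" "parity_colour s (c, i)"
  shows "gain path_edge U (c, i)
      + (int (card (black_right_ends s (move path_edge U (c, i)))) - int (card (black_right_ends s U)))
    \<le> left_gain_bound U (c, i)"
proof -
  have "odd i = s" using x(2) unfolding parity_colour_def by simp
  moreover have "occ U c i 0" using x(1) unfolding occ_def by simp
  ultimately show ?thesis
    unfolding gain_move_path[OF fin iso] card_black_right_ends_move[OF fin iso] left_gain_bound_occ
      mem_Diff_move_occ mem_black_right_ends_move_occ
    unfolding mem_black_right_ends_occ
    using occ_neighbour[OF iso, of c i 0] occ_neighbour[OF iso, of c i 2]
      occ_neighbour[OF iso, of c i "-2"] occ_neighbour[OF iso, of c i 3] occ_neighbour[OF iso, of c i "-3"]
    by (simp del: sum_of_bool_eq add: occ_after_move_iff odd_add_eq_iff)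
qed

lemma right_move_bound:
  assumes fin: "finite U" and iso: "isolated path_edge U = {}"
    and y: "(c, i) \<in> U" "\<not> parity_colour s (c, i)"
  shows "right_gain_bound U (c, i)
    \<le> gain path_edge U (c, i)
      - (int (card (black_right_ends s (move path_edge U (c, i)))) - int (card (black_right_ends s U)))"
proof -
  have "even i = s" using y(2) unfolding parity_colour_def by simp
  moreover have "occ U c i 0" using y(1) unfolding occ_def by simp
  moreover have "right_gain_bound U (c, i) = right_gain_bound U (c, i + 0)" by simp
  ultimately show ?thesis
    unfolding gain_move_path[OF fin iso] card_black_right_ends_move[OF fin iso] right_gain_bound_occ
      mem_Diff_move_occ mem_black_right_ends_move_occ
    unfolding mem_black_right_ends_occ
    using occ_neighbour[OF iso, of c i 0] occ_neighbour[OF iso, of c i 2]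
      occ_neighbour[OF iso, of c i "-2"] occ_neighbour[OF iso, of c i 3] occ_neighbour[OF iso, of c i "-3"]
    by (simp del: sum_of_bool_eq add: occ_after_move_iff odd_add_eq_iff right_gain_bound_occ)
qed

lemma path_run_end:
  assumes fin: "finite U" and "(c, i) \<in> U"
  obtains d :: nat where "\<And>t. t \<le> d \<Longrightarrow> occ U c i (int t)" "\<not> occ U c i (int d + 1)"
proof -
  let ?D = "{d::nat. \<forall>t\<le>d. occ U c i (int t)}"
  have "?D \<subseteq> (\<lambda>d. (c, i + int d)) -` U" unfolding occ_def by auto
  moreover have "finite ((\<lambda>d. (c, i + int d)) -` U)"
    using fin by (rule finite_vimageI) (auto simp: inj_def)
  ultimately have finD: "finite ?D" by (rule finite_subset)
  define d where "d = Max ?D"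
  have "0 \<in> ?D" using assms(2) unfolding occ_def by simp
  then have dD: "d \<in> ?D" unfolding d_def using Max_in[OF finD] by blast
  have "\<not> occ U c i (int d + 1)"
  proof
    assume occ: "occ U c i (int d + 1)"
    have "Suc d \<in> ?D"
    proof (clarify)
      fix t assume "t \<le> Suc d"
      then show "occ U c i (int t)" using dD occ by (cases "t = Suc d") (auto simp: add.commute)
    qed
    then have "Suc d \<le> d" unfolding d_def using finD by (intro Max_ge) auto
    then show False by simp
  qed
  moreover have "occ U c i (int t)" if "t \<le> d" for t using dD that by blast
  ultimately show ?thesis using that by blast
qed

lemma right_gain_bound_at_run_end:
  assumes run: "\<And>t. t \<le> d \<Longrightarrow> occ U c i (int t)" and stop: "\<not> occ U c i (int d + 1)" and "2 \<le> d"
  obtains k where "occ U c i k" "odd k" "4 \<le> right_gain_bound U (c, i + k)"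
proof (cases "even d")
  case True
  have "4 \<le> right_gain_bound U (c, i + (int d - 1))"
    unfolding right_gain_bound_occ using run[of "d - 2"] run[of d] stop assms(3)
    by (simp add: of_nat_diff algebra_simps)
  moreover have "occ U c i (int d - 1)" using run[of "d - 1"] assms(3) by (simp add: of_nat_diff)
  ultimately show ?thesis using that True by simp
next
  case False
  then have "3 \<le> d" using assms(3) by presburger
  then have "4 \<le> right_gain_bound U (c, i + (int d - 2))"
    unfolding right_gain_bound_occ using run[of "d - 3"] run[of "d - 1"] run[of d] stop
    by (simp add: of_nat_diff algebra_simps)
  moreover have "occ U c i (int d - 2)" using run[of "d - 2"] assms(3) by (simp add: of_nat_diff)
  ultimately show ?thesis using that False by simp
qed

text \<open>The matching Right move sits near the right end of the run of occupied positions starting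
  at \<open>x\<close>.\<close>
lemma exists_right_move_dominating:
  assumes fin: "finite U" and iso: "isolated path_edge U = {}"
    and x: "(c, i) \<in> U" "parity_colour s (c, i)"
  shows "\<exists>y\<in>U. \<not> parity_colour s y \<and> left_gain_bound U (c, i) \<le> right_gain_bound U y"
proof -
  have witness: "\<exists>y\<in>U. \<not> parity_colour s y \<and> left_gain_bound U (c, i) \<le> right_gain_bound U y"
    if "occ U c i k" "odd k" "left_gain_bound U (c, i) \<le> right_gain_bound U (c, i + k)" for k
  proof -
    have "(c, i + k) \<in> U" "\<not> parity_colour s (c, i + k)"
      using that x(2) unfolding occ_def parity_colour_def by simp_all
    then show ?thesis using that(3) by blast
  qed
  obtain d :: nat where run: "\<And>t. t \<le> d \<Longrightarrow> occ U c i (int t)" and stop: "\<not> occ U c i (int d + 1)"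
    using path_run_end[OF fin x(1)] by blast
  consider "d = 0" | "d = 1" "occ U c i (-1)" | "d = 1" "\<not> occ U c i (-1)" | "2 \<le> d" by linarith
  then show ?thesis
  proof cases
    case 1
    have "occ U c i (-1)" using occ_neighbour[OF iso run[of 0]] stop 1 by simp
    moreover have "left_gain_bound U (c, i) \<le> right_gain_bound U (c, i + (-1))"
      unfolding left_gain_bound_occ right_gain_bound_occ using run[of 0] stop 1 by simp
    ultimately show ?thesis using witness by simp
  next
    case 2
    have "left_gain_bound U (c, i) \<le> right_gain_bound U (c, i + (-1))"
      unfolding left_gain_bound_occ right_gain_bound_occ using run[of 0] run[of 1] stop 2 by simp
    then show ?thesis using witness 2 by simp
  next
    case 3
    have "left_gain_bound U (c, i) \<le> right_gain_bound U (c, i + 1)"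
      unfolding left_gain_bound_occ right_gain_bound_occ using run[of 0] run[of 1] stop 3 by simp
    then show ?thesis using witness run[of 1] 3 by simp
  next
    case 4
    then obtain k where "occ U c i k" "odd k" "4 \<le> right_gain_bound U (c, i + k)"
      using right_gain_bound_at_run_end[OF run stop] by blast
    then show ?thesis using witness left_gain_bound_le_4[of U "(c, i)"] by fastforce
  qed
qed

lemma score_Left_le_black_right_ends_step:
  assumes fin: "finite U" and iso: "isolated path_edge U = {}"
    and IH: "\<forall>x\<in>U. score (parity_colour s) path_edge False (move path_edge U x)
                   \<le> int (card (black_right_ends s (move path_edge U x)))"
    and k: "\<forall>x\<in>U. parity_colour s x \<longrightarrow> left_gain_bound U x \<le> k" "0 \<le> k"
  shows "score (parity_colour s) path_edge True U \<le> int (card (black_right_ends s U)) + k"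
proof (cases "\<exists>x\<in>U. parity_colour s x")
  case False
  then show ?thesis using score_Left_no_move[OF fin] k(2) by simp
next
  case True
  then obtain x0 where x0: "x0 \<in> U" "parity_colour s x0" by blast
  obtain x where x: "x \<in> U" "parity_colour s x"
    "score (parity_colour s) path_edge True U
       = gain path_edge U x + score (parity_colour s) path_edge False (move path_edge U x)"
    using score_Left_attained[of U x0 "parity_colour s" path_edge, OF fin x0] by blast
  obtain c i where "x = (c, i)" by (cases x)
  then have "gain path_edge U x
      + (int (card (black_right_ends s (move path_edge U x))) - int (card (black_right_ends s U)))
    \<le> left_gain_bound U x"
    using left_move_bound[OF fin iso] x(1,2) by blast
  then show ?thesis using x(3) IH[rule_format, OF x(1)] k(1)[rule_format, OF x(1,2)] by linarith
qed

lemma score_Right_le_black_right_ends_step: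
  assumes fin: "finite U" and iso: "isolated path_edge U = {}"
    and IH: "\<forall>y\<in>U. \<forall>k\<ge>0.
      (\<forall>x\<in>move path_edge U y. parity_colour s x \<longrightarrow> left_gain_bound (move path_edge U y) x \<le> k) \<longrightarrow>
      score (parity_colour s) path_edge True (move path_edge U y)
        \<le> int (card (black_right_ends s (move path_edge U y))) + k"
  shows "score (parity_colour s) path_edge False U \<le> int (card (black_right_ends s U))"
proof (cases "U = {}")
  case True
  then show ?thesis by (simp add: score_empty)
next
  case False
  let ?B = "{x \<in> U. parity_colour s x}"
  have "?B \<noteq> {}"
    using False bipartite.exists_both_colours(1)[OF bipartite_path iso] by blast
  then obtain xm where xm: "xm \<in> ?B" "left_gain_bound U xm = Max (left_gain_bound U ` ?B)"
    using Max_in[of "left_gain_bound U ` ?B"] fin by fastforce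
  have xm_max: "left_gain_bound U x \<le> left_gain_bound U xm" if "x \<in> ?B" for x
    using xm(2) fin that by simp
  obtain c i where "xm = (c, i)" by (cases xm)
  then obtain y where y: "y \<in> U" "\<not> parity_colour s y" "left_gain_bound U xm \<le> right_gain_bound U y"
    using exists_right_move_dominating[OF fin iso] xm(1) by blast
  obtain c' i' where "y = (c', i')" by (cases y)
  then have "right_gain_bound U y
      \<le> gain path_edge U y - (int (card (black_right_ends s (move path_edge U y))) - int (card (black_right_ends s U)))"
    using right_move_bound[OF fin iso] y(1,2) by blast
  moreover have "score (parity_colour s) path_edge False U
      \<le> score (parity_colour s) path_edge True (move path_edge U y) - gain path_edge U y"
    using score_Right_le_move[of U y "parity_colour s" path_edge, OF fin y(1,2)] .
  moreover have "left_gain_bound (move path_edge U y) x \<le> left_gain_bound U xm"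
    if "x \<in> move path_edge U y" "parity_colour s x" for x
    using left_gain_bound_mono[OF move_subset, of path_edge U y x] xm_max[of x] that move_subset by fastforce
  then have "score (parity_colour s) path_edge True (move path_edge U y)
      \<le> int (card (black_right_ends s (move path_edge U y))) + left_gain_bound U xm"
    using IH y(1) left_gain_bound_nonneg by blast
  ultimately show ?thesis using y(3) by linarith
qed

lemma score_le_black_right_ends:
  "finite U \<Longrightarrow> isolated path_edge U = {} \<Longrightarrow>
    score (parity_colour s) path_edge False U \<le> int (card (black_right_ends s U))
    \<and> (\<forall>k\<ge>0. (\<forall>x\<in>U. parity_colour s x \<longrightarrow> left_gain_bound U x \<le> k) \<longrightarrow>
        score (parity_colour s) path_edge True U \<le> int (card (black_right_ends s U)) + k)"
proof (induction "card U" arbitrary: U rule: less_induct)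
  case less
  note fin = less.prems(1) and iso = less.prems(2)
  have IH: "score (parity_colour s) path_edge False (move path_edge U x)
        \<le> int (card (black_right_ends s (move path_edge U x)))
    \<and> (\<forall>k\<ge>0. (\<forall>x'\<in>move path_edge U x. parity_colour s x' \<longrightarrow> left_gain_bound (move path_edge U x) x' \<le> k) \<longrightarrow>
        score (parity_colour s) path_edge True (move path_edge U x)
          \<le> int (card (black_right_ends s (move path_edge U x))) + k)" if "x \<in> U" for x
    using less.hyps[OF card_move_less[OF fin that]] finite_move[OF fin]
      bipartite.isolated_move[OF bipartite_path] by blast
  show ?case
    using score_Right_le_black_right_ends_step[OF fin iso] score_Left_le_black_right_ends_step[OF fin iso] IH
    by blast
qed

corollary score_Right_le_black_right_ends:
  "finite U \<Longrightarrow> isolated path_edge U = {} \<Longrightarrow>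
    score (parity_colour s) path_edge False U \<le> int (card (black_right_ends s U))"
  using score_le_black_right_ends by blast

corollary score_Left_le_black_right_ends:
  "finite U \<Longrightarrow> isolated path_edge U = {} \<Longrightarrow>
    score (parity_colour s) path_edge True U \<le> int (card (black_right_ends s U)) + 4"
  using score_le_black_right_ends left_gain_bound_le_4 by simp

section \<open>Blocks of parallel paths\<close>

definition paths :: "nat \<Rightarrow> nat \<Rightarrow> (nat \<times> int) set" where
  "paths m p = {0..<p} \<times> {1..int m}"

text \<open>Reflection preserves scores but puts every right end at position -1, so the potential of the
  mirrored block does not depend on the parity of \<open>m\<close>.\<close>
definition mirrored_paths :: "nat \<Rightarrow> nat \<Rightarrow> (nat \<times> int) set" where
  "mirrored_paths m p = {0..<p} \<times> {- int m..-1}"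

lemma finite_paths: "finite (paths m p)"
  unfolding paths_def by simp

lemma finite_mirrored_paths: "finite (mirrored_paths m p)"
  unfolding mirrored_paths_def by simp

lemma isolated_path_block: "2 \<le> m \<Longrightarrow> isolated path_edge (C \<times> {a..a + int m - 1}) = {}"
proof (rule equals0I)
  fix v assume m: "2 \<le> m" and v: "v \<in> isolated path_edge (C \<times> {a..a + int m - 1})"
  obtain c i where v_eq: "v = (c, i)" by (cases v)
  have "(c, i + 1) \<in> C \<times> {a..a + int m - 1} \<or> (c, i - 1) \<in> C \<times> {a..a + int m - 1}"
    using v m unfolding v_eq isolated_def by auto
  moreover have "path_edge (c, i) (c, i + 1)" "path_edge (c, i) (c, i - 1)"
    by (simp_all add: path_edge_def)
  ultimately show False using v unfolding v_eq isolated_def by blast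
qed

lemma isolated_paths: "2 \<le> m \<Longrightarrow> isolated path_edge (paths m p) = {}"
  unfolding paths_def using isolated_path_block[of m _ 1] by simp

lemma isolated_mirrored_paths: "2 \<le> m \<Longrightarrow> isolated path_edge (mirrored_paths m p) = {}"
  unfolding mirrored_paths_def using isolated_path_block[of m _ "- int m"] by simp

lemma card_black_right_ends_paths:
  "1 \<le> m \<Longrightarrow> int (card (black_right_ends s (paths m p))) = int p * of_bool (odd m = s)"
proof -
  assume "1 \<le> m"
  then have "black_right_ends s (paths m p) = {0..<p} \<times> ({int m} \<inter> {i. odd i = s})"
    unfolding black_right_ends_def paths_def parity_colour_def by auto
  then show ?thesis by (cases "odd m = s") (auto simp: card_cartesian_product)
qed

lemma card_black_right_ends_mirrored_paths:
  "1 \<le> m \<Longrightarrow> int (card (black_right_ends s (mirrored_paths m p))) = int p * of_bool s"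
proof -
  assume "1 \<le> m"
  then have "black_right_ends s (mirrored_paths m p) = {0..<p} \<times> ({-1} \<inter> {i. odd i = s})"
    unfolding black_right_ends_def mirrored_paths_def parity_colour_def by auto
  then show ?thesis by (cases s) (auto simp: card_cartesian_product)
qed

lemma score_mirrored_paths:
  "score (parity_colour s) path_edge lft (mirrored_paths m p) = score (parity_colour s) path_edge lft (paths m p)"
proof -
  let ?h = "\<lambda>v::nat \<times> int. (fst v, - snd v)"
  have "?h ` paths m p = mirrored_paths m p"
  proof
    show "?h ` paths m p \<subseteq> mirrored_paths m p" unfolding paths_def mirrored_paths_def by auto
    show "mirrored_paths m p \<subseteq> ?h ` paths m p"
    proof
      fix v assume "v \<in> mirrored_paths m p"
      then show "v \<in> ?h ` paths m p"
        by (intro image_eqI[where x = "?h v"]) (auto simp: paths_def mirrored_paths_def)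
    qed
  qed
  moreover have "score (parity_colour s) path_edge lft (?h ` paths m p)
      = score (parity_colour s) path_edge lft (paths m p)"
    by (rule score_image) (auto simp: finite_paths inj_on_def path_edge_def parity_colour_def)
  ultimately show ?thesis by simp
qed

lemma score_paths_add:
  assumes m: "2 \<le> m"
  shows "score (parity_colour s) path_edge True (paths m (p + q))
    \<le> score (parity_colour s) path_edge True (paths m p) + score (parity_colour s) path_edge True (paths m q)"
proof -
  interpret bipartite "parity_colour s" path_edge by (rule bipartite_path)
  let ?T = "\<lambda>v::nat \<times> int. (fst v + p, snd v)"
  have T: "?T ` paths m q = {p..<p + q} \<times> {1..int m}"
  proof
    show "?T ` paths m q \<subseteq> {p..<p + q} \<times> {1..int m}" unfolding paths_def by auto
    show "{p..<p + q} \<times> {1..int m} \<subseteq> ?T ` paths m q"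
    proof
      fix v assume "v \<in> {p..<p + q} \<times> {1..int m}"
      then show "v \<in> ?T ` paths m q"
        by (intro image_eqI[where x = "(fst v - p, snd v)"]) (auto simp: paths_def)
    qed
  qed
  have "paths m (p + q) = paths m p \<union> ?T ` paths m q"
    unfolding T unfolding paths_def by auto
  moreover have "score (parity_colour s) path_edge True (?T ` paths m q)
      = score (parity_colour s) path_edge True (paths m q)"
    by (rule score_image) (auto simp: finite_paths inj_on_def path_edge_def parity_colour_def)
  moreover have "isolated path_edge (?T ` paths m q) = {}"
    unfolding T using isolated_path_block[OF m, of _ 1] by simp
  moreover have "separated path_edge (paths m p) (?T ` paths m q)"
    unfolding T separated_def paths_def path_edge_def by auto
  ultimately show ?thesis
    using score_Un_le[of "paths m p" "?T ` paths m q"] finite_paths isolated_paths[OF m] by auto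
qed

lemma score_paths_upper:
  assumes "2 \<le> m"
  shows "score (parity_colour s) path_edge True (paths m p) \<le> int p * of_bool (s \<and> odd m) + 4"
proof (cases s)
  case True
  then show ?thesis
    using score_Left_le_black_right_ends[of "paths m p" s, OF finite_paths isolated_paths[OF assms]]
      card_black_right_ends_paths[of m s p] assms by auto
next
  case False
  then show ?thesis
    using score_Left_le_black_right_ends[of "mirrored_paths m p" s, OF finite_mirrored_paths isolated_mirrored_paths[OF assms]]
      card_black_right_ends_mirrored_paths[of m s p] score_mirrored_paths[of s True m p] assms by auto
qed

lemma score_paths_lower:
  assumes "2 \<le> m"
  shows "- int p * of_bool (\<not> s \<and> odd m) \<le> score (parity_colour s) path_edge True (paths m p)"
proof -
  have "(\<lambda>v. \<not> parity_colour (\<not> s) v) = parity_colour s"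
    unfolding parity_colour_def by auto
  then have swap: "score (parity_colour s) path_edge True (paths m p)
      = - score (parity_colour (\<not> s)) path_edge False (paths m p)"
    using score_swap_colours[OF finite_paths, of "parity_colour (\<not> s)" path_edge True m p] by simp
  have "score (parity_colour (\<not> s)) path_edge False (paths m p) \<le> int p * of_bool (odd m = (\<not> s))"
    using score_Right_le_black_right_ends[of "paths m p" "\<not> s", OF finite_paths isolated_paths[OF assms]]
      card_black_right_ends_paths[of m "\<not> s" p] assms by auto
  moreover have "score (parity_colour (\<not> s)) path_edge False (paths m p) \<le> int p * of_bool (\<not> s)"
    using score_Right_le_black_right_ends[of "mirrored_paths m p" "\<not> s", OF finite_mirrored_paths isolated_mirrored_paths[OF assms]]
      card_black_right_ends_mirrored_paths[of m "\<not> s" p] score_mirrored_paths[of "\<not> s" False m p] assms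
    by auto
  ultimately show ?thesis unfolding swap by (cases s) auto
qed

section \<open>Fekete's lemma\<close>

lemma subadditive_le_mult_add:
  fixes b :: "nat \<Rightarrow> real"
  assumes sub: "\<And>p q. b (p + q) \<le> b p + b q"
  shows "b (q * m + r) \<le> real q * b m + b r"
proof (induction q)
  case (Suc q)
  have "b (Suc q * m + r) \<le> b m + b (q * m + r)"
    using sub[of m "q * m + r"] by (simp add: add.assoc)
  then show ?case using Suc by (simp add: algebra_simps)
qed simp

lemma subadditive_div_le:
  fixes b :: "nat \<Rightarrow> real"
  assumes sub: "\<And>p q. b (p + q) \<le> b p + b q" and nonneg: "\<And>p. 0 \<le> b p"
    and m: "1 \<le> m" and n: "1 \<le> n"
  shows "b n / real n \<le> b m / real m + (\<Sum>t<m. b t) / real n"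
proof -
  have "n div m * m \<le> n" using div_mult_mod_eq[of n m] by linarith
  then have "real (n div m) * real m \<le> real n" by (metis of_nat_le_iff of_nat_mult)
  then have "real (n div m) * b m \<le> real n / real m * b m"
    using m nonneg[of m] by (intro mult_right_mono) (simp_all add: field_simps)
  moreover have "b (n mod m) \<le> (\<Sum>t<m. b t)"
    using m nonneg by (intro member_le_sum) auto
  moreover have "b n \<le> real (n div m) * b m + b (n mod m)"
    using subadditive_le_mult_add[OF sub, of "n div m" m "n mod m"] by simp
  ultimately have "b n \<le> real n * (b m / real m) + (\<Sum>t<m. b t)" by simp
  then show ?thesis using n by (simp add: field_simps)
qed

lemma subadditive_convergent:
  fixes b :: "nat \<Rightarrow> real"
  assumes sub: "\<And>p q. b (p + q) \<le> b p + b q" and nonneg: "\<And>p. 0 \<le> b p"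
  shows "convergent (\<lambda>p. b p / real p)"
proof -
  define S where "S = (\<lambda>p. b p / real p) ` {1..}"
  have S_ne: "S \<noteq> {}" and S_bdd: "bdd_below S"
    unfolding S_def using nonneg by (auto intro: bdd_belowI[of _ 0])
  define L where "L = Inf S"
  have "(\<lambda>p. b p / real p) \<longlonglongrightarrow> L"
  proof (rule LIMSEQ_I)
    fix r :: real assume r: "0 < r"
    have "Inf S < L + r / 2" unfolding L_def using r by simp
    then obtain m where m: "1 \<le> m" "b m / real m < L + r / 2"
      using cInf_less_iff[OF S_ne S_bdd] unfolding S_def by auto
    define C where "C = (\<Sum>t<m. b t)"
    obtain N :: nat where N: "2 * C / r < real N" using reals_Archimedean2 by blast
    show "\<exists>no. \<forall>n\<ge>no. norm (b n / real n - L) < r"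
    proof (intro exI allI impI)
      fix n assume n: "max 1 N \<le> n"
      then have "2 * C / r < real n" using N by linarith
      then have "C / real n < r / 2" using r n by (simp add: field_simps)
      moreover have "b n / real n \<le> b m / real m + C / real n"
        unfolding C_def using subadditive_div_le[OF sub nonneg m(1)] n by simp
      moreover have "L \<le> b n / real n"
        unfolding L_def S_def using S_bdd n by (intro cInf_lower) (auto simp: S_def)
      ultimately have "0 \<le> b n / real n - L" "b n / real n - L < r"
        using m(2) by linarith+
      then show "norm (b n / real n - L) < r" by simp
    qed
  qed
  then show ?thesis unfolding convergent_def by blast
qed

lemma subadditive_lim_bounds:
  fixes a :: "nat \<Rightarrow> real"
  assumes sub: "\<And>p q. a (p + q) \<le> a p + a q"
    and lower: "\<And>p. lo * real p \<le> a p" and upper: "\<And>p. a p \<le> hi * real p + C"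
  shows "lo \<le> lim (\<lambda>p. a p / real p) \<and> lim (\<lambda>p. a p / real p) \<le> hi"
proof -
  define b where "b p = a p - lo * real p" for p
  have "convergent (\<lambda>p. b p / real p)"
    using sub lower by (intro subadditive_convergent) (auto simp: b_def algebra_simps)
  then obtain L where "(\<lambda>p. b p / real p) \<longlonglongrightarrow> L" unfolding convergent_def by blast
  then have "(\<lambda>p. b p / real p + lo) \<longlonglongrightarrow> L + lo" by (intro tendsto_intros)
  moreover have "eventually (\<lambda>p. b p / real p + lo = a p / real p) sequentially"
    unfolding eventually_sequentially b_def by (rule exI[of _ 1]) (auto simp: field_simps)
  ultimately have lim: "(\<lambda>p. a p / real p) \<longlonglongrightarrow> L + lo" by (rule Lim_transform_eventually)
  have "\<forall>p\<ge>1. lo \<le> a p / real p \<and> a p / real p \<le> hi + C / real p"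
    using lower upper by (auto simp: field_simps)
  moreover have "(\<lambda>p. hi + C / real p) \<longlonglongrightarrow> hi"
    using tendsto_add[OF tendsto_const lim_const_over_n] by simp
  ultimately have "lo \<le> L + lo" "L + lo \<le> hi"
    using LIMSEQ_le_const[OF lim] LIMSEQ_le[OF lim] by blast+
  then show ?thesis using limI[OF lim] by simp
qed

section \<open>The mean of a segment\<close>

lemma Ls_copies_segment_0: "Ls (copies p (segment 0)) = 0"
  by (simp add: Ls_def copies_def segment_def iso_credit_def isolated_def)

lemma Ls_copies_segment_1:
  assumes "\<bar>n\<bar> = 1"
  shows "Ls (copies p (segment n)) = (if 0 < n then int p else - int p)"
proof -
  let ?V = "{0..<p} \<times> {1::nat}"
  let ?bl = "\<lambda>(c::nat, v::nat). if 0 < n then odd v else even v"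
  let ?E = "\<lambda>(c::nat, v::nat) (d, w). c = d \<and> (v = w + 1 \<or> w = v + 1)"
  have cp: "copies p (segment n) = (?V, ?bl, ?E)"
    unfolding copies_def segment_def using assms by simp
  have iso: "isolated ?E ?V = ?V" unfolding isolated_def by auto
  have "{v \<in> ?V. ?bl v} = (if 0 < n then ?V else {})" "{v \<in> ?V. \<not> ?bl v} = (if 0 < n then {} else ?V)"
    by auto
  then show ?thesis
    unfolding Ls_def iso_credit_def cp prod.case iso by (simp add: card_cartesian_product bival_empty)
qed

lemma Ls_copies_segment:
  assumes m: "2 \<le> nat \<bar>n\<bar>"
  shows "Ls (copies p (segment n)) = score (parity_colour (0 < n)) path_edge True (paths (nat \<bar>n\<bar>) p)"
proof -
  let ?m = "nat \<bar>n\<bar>"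
  let ?V = "{0..<p} \<times> {1..?m}"
  let ?bl = "\<lambda>(c::nat, v::nat). if 0 < n then odd v else even v"
  let ?E = "\<lambda>(c::nat, v::nat) (d, w). c = d \<and> (v = w + 1 \<or> w = v + 1)"
  let ?f = "\<lambda>v::nat \<times> nat. (fst v, int (snd v))"
  have cp: "copies p (segment n) = (?V, ?bl, ?E)"
    unfolding copies_def segment_def by simp
  have image: "?f ` ?V = paths ?m p"
  proof
    show "?f ` ?V \<subseteq> paths ?m p" unfolding paths_def by auto
    show "paths ?m p \<subseteq> ?f ` ?V"
    proof
      fix v assume "v \<in> paths ?m p"
      then show "v \<in> ?f ` ?V"
        by (intro image_eqI[where x = "(fst v, nat (snd v))"]) (auto simp: paths_def)
    qed
  qed
  have edges: "path_edge (?f u) (?f v) = ?E u v" for u v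
    by (cases u; cases v) (auto simp: path_edge_def)
  have "?f ` isolated ?E ?V = isolated path_edge (?f ` ?V)"
    using edges by (intro image_isolated) auto
  then have iso: "isolated ?E ?V = {}"
    unfolding image isolated_paths[OF m] by simp
  have "Ls (copies p (segment n)) = score ?bl ?E True ?V"
    unfolding Ls_def cp prod.case iso iso_credit_def score_def by simp
  also have "\<dots> = score (parity_colour (0 < n)) path_edge True (?f ` ?V)"
    using edges by (intro score_image[symmetric]) (auto simp: inj_on_def parity_colour_def)
  finally show ?thesis unfolding image .
qed

lemma segment_cases:
  obtains "n = 0" | "\<bar>n\<bar> = 1" "odd n" | "2 \<le> nat \<bar>n\<bar>" "odd (nat \<bar>n\<bar>) \<longleftrightarrow> odd n"
proof -
  have "odd (nat \<bar>n\<bar>) \<longleftrightarrow> odd n" by (cases "n \<ge> 0") (auto simp: even_nat_iff)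
  moreover have "\<bar>n\<bar> = 1 \<Longrightarrow> odd n" by (cases "n \<ge> 0") auto
  ultimately show ?thesis using that by linarith
qed

lemma Ls_copies_segment_bounds:
  "- int p * of_bool (odd n \<and> n < 0) \<le> Ls (copies p (segment n))
   \<and> Ls (copies p (segment n)) \<le> int p * of_bool (odd n \<and> 0 < n) + 4"
proof (cases n rule: segment_cases)
  case 1
  then show ?thesis by (simp add: Ls_copies_segment_0)
next
  case 2
  then show ?thesis by (auto simp: Ls_copies_segment_1)
next
  case 3
  then have "n \<noteq> 0" by auto
  then show ?thesis
    unfolding Ls_copies_segment[OF 3(1)]
    using score_paths_upper[OF 3(1), where s = "0 < n" and p = p]
      score_paths_lower[OF 3(1), where s = "0 < n" and p = p] 3(2)
    by auto
qed

lemma Ls_copies_segment_add: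
  "Ls (copies (p + q) (segment n)) \<le> Ls (copies p (segment n)) + Ls (copies q (segment n))"
proof (cases n rule: segment_cases)
  case 1
  then show ?thesis by (simp add: Ls_copies_segment_0)
next
  case 2
  then show ?thesis by (simp add: Ls_copies_segment_1)
next
  case 3
  then show ?thesis unfolding Ls_copies_segment[OF 3(1)] by (intro score_paths_add)
qed

theorem mainTheorem14:
  fixes n :: int
  shows "(even n \<longrightarrow> mean (segment n) = 0)
       \<and> (odd n \<and> n \<ge> 0 \<longrightarrow> 0 \<le> mean (segment n) \<and> mean (segment n) \<le> 1)
       \<and> (odd n \<and> n \<le> 0 \<longrightarrow> -1 \<le> mean (segment n) \<and> mean (segment n) \<le> 0)"
proof -
  define a where "a p = real_of_int (Ls (copies p (segment n)))" for p
  have "- of_bool (odd n \<and> n < 0) \<le> mean (segment n) \<and> mean (segment n) \<le> of_bool (odd n \<and> 0 < n)"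
    unfolding mean_def a_def[symmetric]
  proof (rule subadditive_lim_bounds)
    show "a (p + q) \<le> a p + a q" for p q
      unfolding a_def using Ls_copies_segment_add[of p q n] by simp
    show "- of_bool (odd n \<and> n < 0) * real p \<le> a p" "a p \<le> of_bool (odd n \<and> 0 < n) * real p + 4" for p
    proof -
      have "real_of_int (- int p * of_bool (odd n \<and> n < 0)) \<le> a p"
        "a p \<le> real_of_int (int p * of_bool (odd n \<and> 0 < n) + 4)"
        unfolding a_def of_int_le_iff using Ls_copies_segment_bounds[of p n] by simp_all
      then show "- of_bool (odd n \<and> n < 0) * real p \<le> a p" "a p \<le> of_bool (odd n \<and> 0 < n) * real p + 4"
        by (simp_all add: mult.commute)
    qed
  qed
  moreover have "odd n \<Longrightarrow> n \<noteq> 0" by auto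
  ultimately show ?thesis by auto
qed

end
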